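(* Consider an EF neuron as in the context. Suppose (1) all input spikes are received within the input time window, i.e. $\mathcal F_i^{in}\subseteq\{0,\ldots,T^{in}-1\}$ for all $i\in\Gamma$, and (2) the neuron fires no output spike before the beginning of its output time window, i.e. $\mathcal F^{out}\cap\{0,\ldots,T^{in}-2\}=\emptyset$. For each $i\in\Gamma$ let $\tilde a_i=\sum_{t\in\mathcal F_i^{in}}2^{e^{in}_{max}-t}$ be the value encoded by the $i$-th input LTC spike train, and let $y=\max\big(\sum_{i\in\Gamma}w_i\tilde a_i,\,0\big)$ (the output of an analog ReLU neuron with inputs $\tilde a_i$ and weights $w_i$). Let $S\subseteq\{0,\ldots,T^{out}-1\}$ be the set of spike times of the LTC spike train of $y$ with output exponent range $\{e^{out}_{min},\ldots,e^{out}_{max}\}$ (multi-spike LTC for a multi-spike EF neuron, single-spike LTC for a single-spike EF neuron). Then $\mathcal F^{out}\cap\{T^{in}-1,\ldots,T^{in}+T^{out}-2\}=\{T^{in}-1+s: s\in S\}$.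
   Context: Exponentiate-and-Fire (EF) neuron (discrete time $t\in\mathbb Z$). Fix integers $e^{in}_{min}\le e^{in}_{max}$ (input exponent range), $T^{in}=e^{in}_{max}-e^{in}_{min}+1$ (input time window $\{0,\ldots,T^{in}-1\}$), and integers $e^{out}_{min}\le e^{out}_{max}$ (output exponent range), $T^{out}=e^{out}_{max}-e^{out}_{min}+1$. The output time window is $\{T^{in}-1,\ldots,T^{in}+T^{out}-2\}$. The firing threshold is $V_{th}=2^{e^{out}_{max}}$. The neuron has a finite set $\Gamma$ of synapses with real weights $w_i$, and for each $i\in\Gamma$ a finite set $\mathcal F_i^{in}\subseteq\{0,1,2,\ldots\}$ of input spike times. PSP kernel: $\epsilon(s)=2^{e^{in}_{min}}\cdot 2^{s}\cdot\mathbb 1(s\ge 0)$; total PSP $h_i(t)=\sum_{t^{in}\in\mathcal F_i^{in}}\epsilon(t-t^{in})$. With $\mathcal F^{out}\subseteq\mathbb Z$ the set of output spike times and $\eta$ the afterhyperpolarizing kernel, the membrane potential is $V_m(t)=\sum_{i\in\Gamma}w_i h_i(t)+\sum_{t^{out}\in\mathcal F^{out}}\eta(t-t^{out})\,\mathbb 1(t\ge t^{out})$ and the pre-reset membrane potential is $V_m^-(t)=V_m(t)-\eta(0)\,\mathbb 1(t\in\mathcal F^{out})$ (which depends only on output spikes at times $<t$). Output spikes are generated recursively in time: $t\in\mathcal F^{out}$ if and only if $V_m^-(t)\ge V_{th}$ (so no output spikes occur at negative times, where $V_m^-=0$). For a multi-spike EF neuron, the output spike at $t^{out}$ contributes $\eta(s)=-V_{th}\cdot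 2^{s}$ (reset by subtraction); for a single-spike EF neuron it contributes $\eta(s)=-V_m^-(t^{out})\cdot 2^{s}$ (reset to zero). Logarithmic approximation and LTC, for integers $e_{min}\le e_{max}$ and real $a$: the multi-power LA is $\tilde a=0$ if $a<2^{e_{min}}$, $\tilde a=\lfloor a/2^{e_{min}}\rfloor 2^{e_{min}}$ if $2^{e_{min}}\le a<2^{e_{max}+1}$, $\tilde a=2^{e_{max}+1}-2^{e_{min}}$ if $a\ge 2^{e_{max}+1}$. The single-power LA is $\tilde a=0$ if $a<2^{e_{min}}$, $\tilde a=2^{\lfloor\log_2 a\rfloor}$ if $2^{e_{min}}\le a<2^{e_{max}+1}$, $\tilde a=2^{e_{max}}$ if $a\ge 2^{e_{max}+1}$. Writing $\tilde a=\sum_{e\in E}2^e$ with distinct $E\subseteq\{e_{min},\ldots,e_{max}\}$, the LTC spike train of $a$ is the set of spike times $\{e_{max}-e: e\in E\}\subseteq\{0,\ldots,e_{max}-e_{min}\}$; it is called multi-spike LTC when multi-power LA is used and single-spike LTC when single-power LA is used. Conversely, a spike at time $t$ of an LTC spike train with exponent range $\{e_{min},\ldots,e_{max}\}$ represents $2^{e_{max}-t}$, and the train encodes the sum of these powers. *)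

theory Defs
  imports Complex_Main
begin

text \<open>Kind of EF neuron: multi-spike (reset by subtraction, multi-spike LTC)
  or single-spike (reset to zero, single-spike LTC).\<close>
datatype ef_kind = Multi | Single

definition psp :: "int \<Rightarrow> int \<Rightarrow> real" where
  "psp ein_min s = (if s \<ge> 0 then 2 powr real_of_int ein_min * 2 powr real_of_int s else 0)"

definition total_psp :: "int \<Rightarrow> int set \<Rightarrow> int \<Rightarrow> real" where
  "total_psp ein_min Fin t = (\<Sum>tin\<in>Fin. psp ein_min (t - tin))"

definition ahp :: "ef_kind \<Rightarrow> real \<Rightarrow> real \<Rightarrow> int \<Rightarrow> real" where
  "ahp k Vth vpre_tout s =
     (case k of Multi \<Rightarrow> - Vth * 2 powr real_of_int s
              | Single \<Rightarrow> - vpre_tout * 2 powr real_of_int s)"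

text \<open>V_m^-(t) only contains the afterhyperpolarizations of output spikes at times < t, and
  t is an output spike time iff V_m^-(t) >= V_th.  (This recursion determines Fout and
  Vpre uniquely.)\<close>
definition ef_neuron ::
  "ef_kind \<Rightarrow> int \<Rightarrow> real \<Rightarrow> 'a set \<Rightarrow> ('a \<Rightarrow> real) \<Rightarrow> ('a \<Rightarrow> int set)
     \<Rightarrow> int set \<Rightarrow> (int \<Rightarrow> real) \<Rightarrow> bool" where
  "ef_neuron k ein_min Vth Gamma w F Fout Vpre \<longleftrightarrow>
     (\<forall>t::int. Vpre t =
        (\<Sum>i\<in>Gamma. w i * total_psp ein_min (F i) t)
        + (\<Sum>tout\<in>{s\<in>Fout. s < t}. ahp k Vth (Vpre tout) (t - tout)))
   \<and> (\<forall>t::int. t \<in> Fout \<longleftrightarrow> Vpre t \<ge> Vth)"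

definition multi_LA :: "int \<Rightarrow> int \<Rightarrow> real \<Rightarrow> real" where
  "multi_LA emin emax a =
     (if a < 2 powr real_of_int emin then 0
      else if a < 2 powr real_of_int (emax + 1)
        then real_of_int \<lfloor>a / 2 powr real_of_int emin\<rfloor> * 2 powr real_of_int emin
      else 2 powr real_of_int (emax + 1) - 2 powr real_of_int emin)"

definition single_LA :: "int \<Rightarrow> int \<Rightarrow> real \<Rightarrow> real" where
  "single_LA emin emax a =
     (if a < 2 powr real_of_int emin then 0
      else if a < 2 powr real_of_int (emax + 1)
        then 2 powr real_of_int \<lfloor>log 2 a\<rfloor>
      else 2 powr real_of_int emax)"

definition ltc_of_approx :: "int \<Rightarrow> int \<Rightarrow> real \<Rightarrow> int set" where
  "ltc_of_approx emin emax v =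
     (\<lambda>e. emax - e) ` (THE E. E \<subseteq> {emin..emax} \<and> v = (\<Sum>e\<in>E. 2 powr real_of_int e))"

definition ltc :: "ef_kind \<Rightarrow> int \<Rightarrow> int \<Rightarrow> real \<Rightarrow> int set" where
  "ltc k emin emax a =
     ltc_of_approx emin emax
       (case k of Multi \<Rightarrow> multi_LA emin emax a | Single \<Rightarrow> single_LA emin emax a)"

definition ltc_value :: "int \<Rightarrow> int set \<Rightarrow> real" where
  "ltc_value emax S = (\<Sum>t\<in>S. 2 powr real_of_int (emax - t))"

end

theory Submission
  imports Defs
begin

text \<open>After the input window has closed, every input PSP has the form \<open>2 powr n\<close> times the
  LTC value of its spike train, so at the \<open>n\<close>-th step of the output window the membrane
  potential is \<open>2 powr n\<close> times the weighted input \<open>A\<close> minus the resets so far. Comparing it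
  with \<open>V_th = 2 powr e_out_max\<close> therefore compares \<open>2 powr (e_out_max - n)\<close> with what remains
  of \<open>A\<close>. With reset by subtraction the neuron emits exactly the digits of the greedy binary
  expansion of \<open>A\<close>, which is the multi-power approximation; with reset to zero it emits only
  the leading digit and then stays silent, which is the single-power approximation. Uniqueness
  of binary expansions turns both facts into the claimed identity of spike trains.\<close>

section \<open>Binary expansions\<close>

lemma sum_powr2_less:
  fixes E :: "int set"
  assumes "finite E" "E \<subseteq> {..<m}"
  shows "(\<Sum>e\<in>E. 2 powr real_of_int e) < 2 powr real_of_int m"
  using assms
proof (induction E arbitrary: m rule: finite_remove_induct)
  case empty
  then show ?case by simp
next
  case (remove E)
  define x where "x = Max E"
  have "x \<in> E" "E - {x} \<subseteq> {..<x}"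
    using remove by (auto simp: x_def less_le)
  then have "x < m"
    using remove.prems by auto
  have "(\<Sum>e\<in>E. 2 powr real_of_int e) < 2 powr real_of_int x + 2 powr real_of_int x"
    using remove.IH[OF \<open>x \<in> E\<close> \<open>E - {x} \<subseteq> {..<x}\<close>] \<open>x \<in> E\<close>
    by (simp add: sum.remove[OF remove.hyps(1)])
  also have "\<dots> = 2 powr real_of_int (x + 1)"
    by (simp add: powr_add)
  also have "\<dots> \<le> 2 powr real_of_int m"
    using \<open>x < m\<close> by simp
  finally show ?case .
qed

lemma sum_powr2_less_if_agree_above:
  fixes E1 E2 :: "int set"
  assumes "finite E1" "finite E2" "x \<in> E1" "x \<notin> E2" "\<forall>y>x. y \<in> E1 \<longleftrightarrow> y \<in> E2"
  shows "(\<Sum>e\<in>E2. 2 powr real_of_int e) < (\<Sum>e\<in>E1. 2 powr real_of_int e)"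
proof -
  define H where "H = {y\<in>E1. y > x}"
  define L where "L = {y\<in>E2. y < x}"
  have "H = {y\<in>E2. y > x}"
    using assms(5) by (auto simp: H_def)
  then have "E2 = H \<union> L" "H \<inter> L = {}" "finite H" "finite L"
    using assms by (auto simp: H_def L_def neq_iff)
  then have "(\<Sum>e\<in>E2. 2 powr real_of_int e)
      = (\<Sum>e\<in>H. 2 powr real_of_int e) + (\<Sum>e\<in>L. 2 powr real_of_int e)"
    by (simp add: sum.union_disjoint)
  also have "\<dots> < (\<Sum>e\<in>H. 2 powr real_of_int e) + 2 powr real_of_int x"
    using sum_powr2_less[of L x] \<open>finite L\<close> by (auto simp: L_def)
  also have "\<dots> = (\<Sum>e\<in>insert x H. 2 powr real_of_int e)"
    using \<open>finite H\<close> by (simp add: H_def)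
  also have "\<dots> \<le> (\<Sum>e\<in>E1. 2 powr real_of_int e)"
    by (rule sum_mono2) (use assms in \<open>auto simp: H_def\<close>)
  finally show ?thesis .
qed

lemma sum_powr2_inject:
  fixes E1 E2 :: "int set"
  assumes "finite E1" "finite E2"
    and "(\<Sum>e\<in>E1. 2 powr real_of_int e) = (\<Sum>e\<in>E2. 2 powr real_of_int e)"
  shows "E1 = E2"
proof (rule ccontr)
  assume "E1 \<noteq> E2"
  define D where "D = (E1 - E2) \<union> (E2 - E1)"
  define x where "x = Max D"
  have "finite D" "D \<noteq> {}"
    using assms \<open>E1 \<noteq> E2\<close> by (auto simp: D_def)
  then have "x \<in> D"
    by (simp add: x_def)
  then have "x \<in> E1 - E2 \<or> x \<in> E2 - E1"
    by (simp add: D_def)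
  moreover have "\<forall>y>x. y \<in> E1 \<longleftrightarrow> y \<in> E2"
    using Max_ge[OF \<open>finite D\<close>] by (force simp: x_def D_def)
  ultimately show False
    using sum_powr2_less_if_agree_above assms by (metis Diff_iff less_irrefl)
qed

lemma ltc_of_approx_sum_powr2:
  assumes "E \<subseteq> {emin..emax}"
  shows "ltc_of_approx emin emax (\<Sum>e\<in>E. 2 powr real_of_int e) = (\<lambda>e. emax - e) ` E"
proof -
  have "finite E"
    using assms finite_subset by blast
  have "(THE E'. E' \<subseteq> {emin..emax}
           \<and> (\<Sum>e\<in>E. 2 powr real_of_int e) = (\<Sum>e\<in>E'. 2 powr real_of_int e)) = E"
  proof (rule the_equality)
    fix E' assume "E' \<subseteq> {emin..emax}
      \<and> (\<Sum>e\<in>E. 2 powr real_of_int e) = (\<Sum>e\<in>E'. 2 powr real_of_int e)"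
    then show "E' = E"
      using sum_powr2_inject[OF \<open>finite E\<close>] finite_subset by (metis finite_atLeastAtMost_int)
  qed (use assms in blast)
  then show ?thesis
    unfolding ltc_of_approx_def by (simp only:)
qed

lemma ltc_of_approx_ltc_value:
  assumes "S \<subseteq> {0..emax - emin}"
  shows "ltc_of_approx emin emax (ltc_value emax S) = S"
proof -
  have "inj_on (\<lambda>t. emax - t) S"
    by (simp add: inj_on_def)
  then have "ltc_value emax S = (\<Sum>e\<in>(\<lambda>t. emax - t) ` S. 2 powr real_of_int e)"
    by (simp add: ltc_value_def sum.reindex)
  moreover have "(\<lambda>t. emax - t) ` S \<subseteq> {emin..emax}"
    using assms by auto
  ultimately show ?thesis
    by (simp add: ltc_of_approx_sum_powr2 image_image)
qed

section \<open>Greedy and leading digits\<close>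

lemma ltc_value_prefix_Suc:
  "ltc_value e (int ` (J \<inter> {..<Suc n}))
     = ltc_value e (int ` (J \<inter> {..<n})) + (if n \<in> J then 2 powr real_of_int (e - int n) else 0)"
proof (cases "n \<in> J")
  case True
  then have "int ` (J \<inter> {..<Suc n}) = insert (int n) (int ` (J \<inter> {..<n}))"
    by (auto simp: less_Suc_eq)
  moreover have "int n \<notin> int ` (J \<inter> {..<n})"
    by auto
  ultimately show ?thesis
    using True by (simp add: ltc_value_def)
next
  case False
  then have "J \<inter> {..<Suc n} = J \<inter> {..<n}"
    by (auto simp: less_Suc_eq)
  then show ?thesis
    using False by simp
qed

lemma ltc_value_int_image: "ltc_value e (int ` X) = (\<Sum>j\<in>X. 2 powr real_of_int (e - int j))"
  by (simp add: ltc_value_def sum.reindex)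

lemma powr2_int_succ: "2 powr real_of_int (x + 1) = 2 * 2 powr real_of_int x"
  by (simp add: powr_add)

lemma powr2_le_mult_iff:
  "2 powr real_of_int e \<le> 2 powr real n * x \<longleftrightarrow> 2 powr real_of_int (e - int n) \<le> x"
proof -
  have "2 powr real_of_int e = 2 powr real n * 2 powr real_of_int (e - int n)"
    by (simp add: powr_add[symmetric])
  then show ?thesis
    by simp
qed

text \<open>Digit \<open>n\<close> has weight \<open>2 powr (e - n)\<close>, like a spike at time \<open>n\<close> of an LTC spike train
  with maximal exponent \<open>e\<close>.\<close>
definition greedy_digits :: "int \<Rightarrow> real \<Rightarrow> nat set \<Rightarrow> bool" where
  "greedy_digits e a J \<longleftrightarrow>
     (\<forall>n. n \<in> J \<longleftrightarrow> 2 powr real_of_int (e - int n) \<le> a - ltc_value e (int ` (J \<inter> {..<n})))"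

lemma greedy_digitsD:
  "greedy_digits e a J \<Longrightarrow>
     n \<in> J \<longleftrightarrow> 2 powr real_of_int (e - int n) \<le> a - ltc_value e (int ` (J \<inter> {..<n}))"
  unfolding greedy_digits_def by blast

lemma greedy_digits_notin:
  assumes "greedy_digits e a J" "a < 2 powr real_of_int (e - int n)" "m \<le> n"
  shows "m \<notin> J"
  using assms(3)
proof (induction m rule: less_induct)
  case (less m)
  then have "J \<inter> {..<m} = {}"
    by auto
  then have "ltc_value e (int ` (J \<inter> {..<m})) = 0"
    by (simp add: ltc_value_def)
  moreover have "2 powr real_of_int (e - int n) \<le> 2 powr real_of_int (e - int m)"
    using less.prems by simp
  ultimately show ?case
    using greedy_digitsD[OF assms(1), of m] assms(2) by linarith
qed

lemma greedy_digits_prefix_saturated: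
  assumes "greedy_digits e a J" "2 powr real_of_int (e + 1) \<le> a"
  shows "ltc_value e (int ` (J \<inter> {..<n})) = 2 powr real_of_int (e + 1) - 2 powr real_of_int (e + 1 - int n)"
proof (induction n)
  case 0
  then show ?case by (simp add: ltc_value_def)
next
  case (Suc n)
  have double: "2 powr real_of_int (e + 1 - int n) = 2 * 2 powr real_of_int (e - int n)"
    using powr2_int_succ[of "e - int n"] by (simp add: algebra_simps)
  have "0 < 2 powr real_of_int (e - int n)"
    by simp
  then have "n \<in> J"
    using greedy_digitsD[OF assms(1), of n] assms(2) Suc.IH double by linarith
  moreover have "e + 1 - int (Suc n) = e - int n"
    by simp
  ultimately show ?case
    using Suc.IH double by (simp only: ltc_value_prefix_Suc if_True)
qed

lemma greedy_digits_remainder_bounds: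
  assumes "greedy_digits e a J" "0 \<le> a" "a < 2 powr real_of_int (e + 1)"
  shows "0 \<le> a - ltc_value e (int ` (J \<inter> {..<n}))
    \<and> a - ltc_value e (int ` (J \<inter> {..<n})) < 2 powr real_of_int (e + 1 - int n)"
proof (induction n)
  case 0
  then show ?case using assms by (simp add: ltc_value_def)
next
  case (Suc n)
  have double: "2 powr real_of_int (e + 1 - int n) = 2 * 2 powr real_of_int (e - int n)"
    using powr2_int_succ[of "e - int n"] by (simp add: algebra_simps)
  have shift: "e + 1 - int (Suc n) = e - int n"
    by simp
  show ?case
  proof (cases "n \<in> J")
    case True
    then show ?thesis
      using Suc.IH double greedy_digitsD[OF assms(1), of n]
      unfolding ltc_value_prefix_Suc shift if_P[OF True] by linarith
  next
    case False
    then show ?thesis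
      using Suc.IH double greedy_digitsD[OF assms(1), of n]
      unfolding ltc_value_prefix_Suc shift if_not_P[OF False] by linarith
  qed
qed

lemma reset_by_subtraction_greedy_digits:
  fixes V :: "nat \<Rightarrow> real"
  assumes potential: "\<And>n. V n = 2 powr real n * a
      - (\<Sum>j\<in>J \<inter> {..<n}. 2 powr real_of_int e * 2 powr real_of_int (int n - int j))"
    and spike: "\<And>n. n \<in> J \<longleftrightarrow> 2 powr real_of_int e \<le> V n"
  shows "greedy_digits e a J"
proof -
  have "2 powr real_of_int e * 2 powr real_of_int (int n - int j)
      = 2 powr real n * 2 powr real_of_int (e - int j)" for n j
    by (simp add: powr_add[symmetric] add.commute add_diff_eq)
  then have remainder: "V n = 2 powr real n * (a - ltc_value e (int ` (J \<inter> {..<n})))" for n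
    using potential[of n] by (simp add: ltc_value_int_image sum_distrib_left right_diff_distrib)
  show ?thesis
    by (simp only: greedy_digits_def spike remainder powr2_le_mult_iff simp_thms)
qed

lemma powr2_le_iff_le_floor_log:
  assumes "0 < a"
  shows "2 powr real_of_int m \<le> a \<longleftrightarrow> m \<le> \<lfloor>log 2 a\<rfloor>"
  using assms by (simp add: le_floor_iff le_log_iff)

definition leading_digit :: "int \<Rightarrow> real \<Rightarrow> nat set \<Rightarrow> bool" where
  "leading_digit e a J \<longleftrightarrow>
     (\<forall>n. n \<in> J \<longleftrightarrow> 2 powr real_of_int (e - int n) \<le> a \<and> (\<forall>m<n. a < 2 powr real_of_int (e - int m)))"

lemma leading_digit_nonpos:
  assumes "leading_digit e a J" "a \<le> 0"
  shows "J = {}"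
proof -
  have "\<not> 2 powr real_of_int (e - int n) \<le> a" for n
    using assms(2) powr_gt_zero[of 2 "real_of_int (e - int n)"] by linarith
  then show ?thesis
    using assms(1) by (auto simp: leading_digit_def)
qed

lemma leading_digit_pos:
  assumes "leading_digit e a J" "0 < a"
  shows "J = {nat (e - \<lfloor>log 2 a\<rfloor>)}"
proof -
  define f where "f = \<lfloor>log 2 a\<rfloor>"
  have iff: "2 powr real_of_int (e - int m) \<le> a \<longleftrightarrow> e - int m \<le> f" for m
    unfolding f_def by (rule powr2_le_iff_le_floor_log[OF assms(2)])
  have J: "n \<in> J \<longleftrightarrow> e - int n \<le> f \<and> (\<forall>m<n. f < e - int m)" for n
    using assms(1) unfolding leading_digit_def not_le[symmetric] iff by blast
  have "n \<in> J \<longleftrightarrow> n = nat (e - f)" for n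
  proof
    assume "n \<in> J"
    then have "e - int n \<le> f" "nat (e - f) < n \<longrightarrow> f < e - int (nat (e - f))"
      using J by blast+
    then show "n = nat (e - f)"
      by linarith
  qed (auto simp: J)
  then show ?thesis
    by (auto simp: f_def)
qed

lemma first_index_unique:
  fixes q :: "nat \<Rightarrow> bool"
  assumes "q m0" "\<forall>m<m0. \<not> q m"
  shows "q m \<and> (\<forall>m'<m. \<not> q m') \<longleftrightarrow> m = m0"
  using assms by (metis linorder_neqE_nat)

lemma reset_to_zero_leading_digit:
  fixes V :: "nat \<Rightarrow> real"
  assumes potential: "\<And>n. V n = 2 powr real n * a
      - (\<Sum>j\<in>J \<inter> {..<n}. V j * 2 powr real_of_int (int n - int j))"
    and spike: "\<And>n. n \<in> J \<longleftrightarrow> 2 powr real_of_int e \<le> V n"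
  shows "leading_digit e a J"
proof -
  define q where "q m \<longleftrightarrow> 2 powr real_of_int (e - int m) \<le> a" for m
  \<comment> \<open>After the first spike the reset cancels the input exactly, so the potential stays \<open>0\<close>.\<close>
  have "(n \<in> J \<longleftrightarrow> q n \<and> (\<forall>m<n. \<not> q m)) \<and> V n = (if \<exists>m<n. q m then 0 else 2 powr real n * a)"
    for n
  proof (induction n rule: less_induct)
    case (less n)
    show ?case
    proof (cases "\<exists>m<n. q m")
      case False
      then have "J \<inter> {..<n} = {}"
        using less.IH by auto
      then have "V n = 2 powr real n * a"
        using potential[of n] by simp
      moreover from this have "n \<in> J \<longleftrightarrow> q n"
        unfolding spike q_def by (simp only: powr2_le_mult_iff)
      ultimately show ?thesis
        using False by auto
    next
      case True
      then obtain m where "m < n" "q m"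
        by blast
      then obtain m0 where "q m0" and before: "\<forall>m<m0. \<not> q m"
        using exists_least_iff[of q] by blast
      then have "m0 < n"
        using \<open>m < n\<close> \<open>q m\<close> leI less_le_trans by blast
      have "m \<in> J \<longleftrightarrow> m = m0" if "m < n" for m
        using less.IH[OF that] first_index_unique[OF \<open>q m0\<close> before, of m] by blast
      then have "J \<inter> {..<n} = {m0}"
        using \<open>m0 < n\<close> by blast
      moreover have "V m0 = 2 powr real m0 * a"
        using less.IH[OF \<open>m0 < n\<close>] before by auto
      moreover have "2 powr real m0 * 2 powr real_of_int (int n - int m0) = 2 powr real n"
        by (simp add: powr_add[symmetric])
      ultimately have "V n = 0"
        using potential[of n] by (simp add: mult.commute mult.left_commute)
      then show ?thesis
        using True spike[of n] by simp
    qed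
  qed
  then show ?thesis
    unfolding leading_digit_def q_def not_le[symmetric] by blast
qed

section \<open>Logarithmic approximations\<close>

lemma ltc_value_eq_int_multiple:
  assumes "S \<subseteq> {..d}"
  shows "ltc_value e S = 2 powr real_of_int (e - d) * of_int (\<Sum>t\<in>S. 2 ^ nat (d - t))"
  unfolding ltc_value_def of_int_sum sum_distrib_left
proof (rule sum.cong)
  fix t assume "t \<in> S"
  then have "real_of_int (d - t) = real (nat (d - t))"
    using assms by auto
  then have "2 powr real_of_int (d - t) = 2 ^ nat (d - t)"
    by (simp only: powr_realpow zero_less_numeral)
  moreover have "real_of_int (e - t) = real_of_int (e - d) + real_of_int (d - t)"
    by simp
  ultimately show "2 powr real_of_int (e - t) = 2 powr real_of_int (e - d) * of_int (2 ^ nat (d - t))"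
    by (simp only: powr_add of_int_power of_int_numeral)
qed simp

lemma multi_LA_greedy_digits:
  assumes "emin \<le> emax" "greedy_digits emax a J"
  shows "multi_LA emin emax (max a 0) = ltc_value emax (int ` (J \<inter> {..<nat (emax - emin + 1)}))"
proof -
  define T where "T = nat (emax - emin + 1)"
  define P where "P = ltc_value emax (int ` (J \<inter> {..<T}))"
  have T: "emax + 1 - int T = emin"
    using assms(1) by (simp add: T_def)
  have range: "2 powr real_of_int emin \<le> 2 powr real_of_int (emax + 1)"
    using assms(1) by simp
  moreover have "0 < 2 powr real_of_int emin"
    by simp
  ultimately consider "a < 2 powr real_of_int emin" | "2 powr real_of_int (emax + 1) \<le> a"
    | "0 \<le> a" "2 powr real_of_int emin \<le> a" "a < 2 powr real_of_int (emax + 1)"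
    by (meson dual_order.trans less_imp_le not_le)
  then have "multi_LA emin emax (max a 0) = P"
  proof cases
    case 1
    have "emax - int (T - 1) = emin"
      using T assms(1) by (simp add: T_def)
    then have "J \<inter> {..<T} = {}"
      using greedy_digits_notin[OF assms(2), of "T - 1"] 1 by fastforce
    then show ?thesis
      using 1 by (simp add: multi_LA_def P_def ltc_value_def)
  next
    case 2
    then have "\<not> a < 2 powr real_of_int emin" "\<not> a < 2 powr real_of_int (emax + 1)"
      using range by linarith+
    then show ?thesis
      using greedy_digits_prefix_saturated[OF assms(2) 2, of T] T
      by (simp add: multi_LA_def P_def)
  next
    case 3
    define K where "K = (\<Sum>t\<in>int ` (J \<inter> {..<T}). (2::int) ^ nat (emax - emin - t))"
    have "int ` (J \<inter> {..<T}) \<subseteq> {..emax - emin}"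
      using T by auto
    then have P_multiple: "P = 2 powr real_of_int emin * of_int K"
      unfolding P_def K_def by (simp add: ltc_value_eq_int_multiple)
    moreover have "0 \<le> a - P" "a - P < 2 powr real_of_int emin"
      using greedy_digits_remainder_bounds[OF assms(2) 3(1,3), of T] T by (simp_all add: P_def)
    ultimately have "\<lfloor>a / 2 powr real_of_int emin\<rfloor> = K"
      by (intro floor_unique) (simp_all add: field_simps)
    then show ?thesis
      using 3 P_multiple by (simp add: multi_LA_def)
  qed
  then show ?thesis
    by (simp add: P_def T_def)
qed

lemma ltc_Multi_greedy_digits:
  assumes "emin \<le> emax" "greedy_digits emax a J"
  shows "ltc Multi emin emax (max a 0) = int ` (J \<inter> {..<nat (emax - emin + 1)})"
proof -
  have "int ` (J \<inter> {..<nat (emax - emin + 1)}) \<subseteq> {0..emax - emin}"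
    by auto
  then show ?thesis
    using assms by (simp add: ltc_def multi_LA_greedy_digits ltc_of_approx_ltc_value)
qed

lemma single_LA_leading_digit:
  assumes "emin \<le> emax" "leading_digit emax a J"
  shows "single_LA emin emax (max a 0) = ltc_value emax (int ` (J \<inter> {..<nat (emax - emin + 1)}))"
proof (cases "0 < a")
  case False
  then show ?thesis
    using leading_digit_nonpos[OF assms(2)] by (simp add: single_LA_def ltc_value_def)
next
  case True
  then have "max a 0 = a"
    by simp
  define f where "f = \<lfloor>log 2 a\<rfloor>"
  define T where "T = nat (emax - emin + 1)"
  have J: "J = {nat (emax - f)}"
    using leading_digit_pos[OF assms(2) True] by (simp add: f_def)
  have below: "a < 2 powr real_of_int emin \<longleftrightarrow> f < emin"
    and above: "a < 2 powr real_of_int (emax + 1) \<longleftrightarrow> f \<le> emax"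
    unfolding not_le[symmetric] powr2_le_iff_le_floor_log[OF True] f_def by auto
  consider "f < emin" | "emax < f" | "emin \<le> f" "f \<le> emax"
    by linarith
  then show ?thesis
  proof cases
    case 1
    then have "J \<inter> {..<T} = {}"
      using assms(1) by (auto simp: J T_def)
    then show ?thesis
      using 1 below by (simp add: single_LA_def ltc_value_def T_def)
  next
    case 2
    then have "J \<inter> {..<T} = {0}"
      using assms(1) by (auto simp: J T_def)
    then show ?thesis
      using 2 assms(1) below above by (simp add: single_LA_def ltc_value_def T_def)
  next
    case 3
    then have "J \<inter> {..<T} = {nat (emax - f)}" "emax - int (nat (emax - f)) = f"
      by (auto simp: J T_def)
    then show ?thesis
      using 3 below above \<open>max a 0 = a\<close> by (simp add: single_LA_def ltc_value_def T_def f_def)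
  qed
qed

lemma ltc_Single_leading_digit:
  assumes "emin \<le> emax" "leading_digit emax a J"
  shows "ltc Single emin emax (max a 0) = int ` (J \<inter> {..<nat (emax - emin + 1)})"
proof -
  have "int ` (J \<inter> {..<nat (emax - emin + 1)}) \<subseteq> {0..emax - emin}"
    by auto
  then show ?thesis
    using assms by (simp add: ltc_def single_LA_leading_digit ltc_of_approx_ltc_value)
qed

section \<open>Dynamics of the EF neuron\<close>

lemma total_psp_eq_0:
  assumes "\<forall>tin\<in>Fin. t < tin"
  shows "total_psp emin Fin t = 0"
  unfolding total_psp_def psp_def by (rule sum.neutral) (use assms in auto)

lemma total_psp_eq_ltc_value:
  assumes "Fin \<subseteq> {..t}"
  shows "total_psp emin Fin t = ltc_value (emin + t) Fin"
  unfolding total_psp_def ltc_value_def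
proof (rule sum.cong)
  fix tin assume "tin \<in> Fin"
  then have "0 \<le> t - tin"
    using assms by auto
  moreover have "real_of_int (emin + t - tin) = real_of_int emin + real_of_int (t - tin)"
    by simp
  ultimately show "psp emin (t - tin) = 2 powr real_of_int (emin + t - tin)"
    by (simp only: psp_def if_True powr_add)
qed simp

lemma ltc_value_shift: "ltc_value (e + int n) S = 2 powr real n * ltc_value e S"
  unfolding ltc_value_def sum_distrib_left
proof (rule sum.cong)
  fix t
  have "real_of_int (e + int n - t) = real n + real_of_int (e - t)"
    by simp
  then show "2 powr real_of_int (e + int n - t) = 2 powr real n * 2 powr real_of_int (e - t)"
    by (simp only: powr_add)
qed simp

lemma ef_neuron_potential:
  "ef_neuron k emin Vth Gamma w F Fout Vpre \<Longrightarrow>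
     Vpre t = (\<Sum>i\<in>Gamma. w i * total_psp emin (F i) t)
       + (\<Sum>tout\<in>{s\<in>Fout. s < t}. ahp k Vth (Vpre tout) (t - tout))"
  unfolding ef_neuron_def by blast

lemma ef_neuron_spike_iff:
  "ef_neuron k emin Vth Gamma w F Fout Vpre \<Longrightarrow> t \<in> Fout \<longleftrightarrow> Vth \<le> Vpre t"
  unfolding ef_neuron_def by blast

lemma ef_neuron_nonneg_spikes:
  assumes neuron: "ef_neuron k emin Vth Gamma w F Fout Vpre" and "0 < Vth"
    and input: "\<forall>i\<in>Gamma. F i \<subseteq> {0..}"
  shows "Fout \<subseteq> {0..}"
proof
  fix x assume "x \<in> Fout"
  note spike = ef_neuron_spike_iff[OF neuron]
  have no_input: "total_psp emin (F i) t = 0" if "i \<in> Gamma" "t < 0" for i t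
    using input that by (intro total_psp_eq_0) force
  have potential: "Vpre t = (\<Sum>tout\<in>{s\<in>Fout. s < t}. ahp k Vth (Vpre tout) (t - tout))"
    if "t < 0" for t
    using ef_neuron_potential[OF neuron, of t] no_input that by simp
  show "x \<in> {0..}"
  proof (rule ccontr)
    assume "x \<notin> {0..}"
    define N where "N = {s\<in>Fout. s \<le> x}"
    show False
    \<comment> \<open>If infinitely many spikes precede \<open>x\<close>, the reset sum at \<open>x\<close> is \<open>0\<close> by convention.\<close>
    proof (cases "finite N")
      case True
      define m where "m = Min N"
      have "x \<in> N"
        using \<open>x \<in> Fout\<close> by (simp add: N_def)
      then have "m \<in> N"
        using True Min_in unfolding m_def by blast
      then have "m \<in> Fout" "m < 0"
        using \<open>x \<notin> {0..}\<close> by (auto simp: N_def)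
      have no_earlier: "{s\<in>Fout. s < m} = {}"
        using Min_le[OF True] \<open>m \<in> N\<close> by (force simp: m_def N_def)
      have "Vpre m = 0"
        unfolding potential[OF \<open>m < 0\<close>] no_earlier by simp
      then show False
        using spike[of m] \<open>m \<in> Fout\<close> \<open>0 < Vth\<close> by simp
    next
      case False
      moreover have "N \<subseteq> insert x {s\<in>Fout. s < x}"
        by (auto simp: N_def)
      ultimately have "infinite {s\<in>Fout. s < x}"
        by (meson finite_insert finite_subset)
      then show False
        using potential[of x] spike[of x] \<open>x \<in> Fout\<close> \<open>x \<notin> {0..}\<close> \<open>0 < Vth\<close> by simp
    qed
  qed
qed

lemma ef_neuron_window_potential:
  assumes neuron: "ef_neuron k emin Vth Gamma w F Fout Vpre"
    and input: "\<forall>i\<in>Gamma. F i \<subseteq> {..t0}" and late_spikes: "Fout \<subseteq> {t0..}"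
  shows "Vpre (t0 + int n) = 2 powr real n * (\<Sum>i\<in>Gamma. w i * ltc_value (emin + t0) (F i))
    + (\<Sum>j\<in>{j. t0 + int j \<in> Fout} \<inter> {..<n}. ahp k Vth (Vpre (t0 + int j)) (int n - int j))"
proof -
  define J where "J = {j. t0 + int j \<in> Fout}"
  have "total_psp emin (F i) (t0 + int n) = 2 powr real n * ltc_value (emin + t0) (F i)"
    if "i \<in> Gamma" for i
  proof -
    have "F i \<subseteq> {..t0 + int n}"
      using input that by force
    then show ?thesis
      using ltc_value_shift[of "emin + t0" n] by (simp add: total_psp_eq_ltc_value add.assoc)
  qed
  then have inputs: "(\<Sum>i\<in>Gamma. w i * total_psp emin (F i) (t0 + int n))
      = 2 powr real n * (\<Sum>i\<in>Gamma. w i * ltc_value (emin + t0) (F i))"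
    by (simp add: sum_distrib_left mult.left_commute)
  have "{s\<in>Fout. s < t0 + int n} = (\<lambda>j. t0 + int j) ` (J \<inter> {..<n})"
  proof (intro equalityI subsetI)
    fix s assume "s \<in> {s\<in>Fout. s < t0 + int n}"
    then have "s = t0 + int (nat (s - t0))" "nat (s - t0) \<in> J \<inter> {..<n}"
      using late_spikes by (auto simp: J_def)
    then show "s \<in> (\<lambda>j. t0 + int j) ` (J \<inter> {..<n})"
      by blast
  qed (auto simp: J_def)
  moreover have "inj_on (\<lambda>j. t0 + int j) (J \<inter> {..<n})"
    by (simp add: inj_on_def)
  ultimately show ?thesis
    using ef_neuron_potential[OF neuron, of "t0 + int n"]
    by (simp add: inputs sum.reindex J_def)
qed

lemma ef_neuron_Multi_greedy_digits:
  assumes neuron: "ef_neuron Multi emin (2 powr real_of_int e) Gamma w F Fout Vpre"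
    and input: "\<forall>i\<in>Gamma. F i \<subseteq> {..t0}" and late_spikes: "Fout \<subseteq> {t0..}"
  shows "greedy_digits e (\<Sum>i\<in>Gamma. w i * ltc_value (emin + t0) (F i)) {j. t0 + int j \<in> Fout}"
    (is "greedy_digits e ?A ?J")
proof (rule reset_by_subtraction_greedy_digits)
  show "Vpre (t0 + int n) = 2 powr real n * ?A
      - (\<Sum>j\<in>?J \<inter> {..<n}. 2 powr real_of_int e * 2 powr real_of_int (int n - int j))" for n
    using ef_neuron_window_potential[OF neuron input late_spikes, of n]
    by (simp add: ahp_def sum_negf)
  show "n \<in> ?J \<longleftrightarrow> 2 powr real_of_int e \<le> Vpre (t0 + int n)" for n
    using ef_neuron_spike_iff[OF neuron] by blast
qed

lemma ef_neuron_Single_leading_digit: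
  assumes neuron: "ef_neuron Single emin (2 powr real_of_int e) Gamma w F Fout Vpre"
    and input: "\<forall>i\<in>Gamma. F i \<subseteq> {..t0}" and late_spikes: "Fout \<subseteq> {t0..}"
  shows "leading_digit e (\<Sum>i\<in>Gamma. w i * ltc_value (emin + t0) (F i)) {j. t0 + int j \<in> Fout}"
    (is "leading_digit e ?A ?J")
proof (rule reset_to_zero_leading_digit)
  show "Vpre (t0 + int n) = 2 powr real n * ?A
      - (\<Sum>j\<in>?J \<inter> {..<n}. Vpre (t0 + int j) * 2 powr real_of_int (int n - int j))" for n
    using ef_neuron_window_potential[OF neuron input late_spikes, of n]
    by (simp add: ahp_def sum_negf)
  show "n \<in> ?J \<longleftrightarrow> 2 powr real_of_int e \<le> Vpre (t0 + int n)" for n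
    using ef_neuron_spike_iff[OF neuron] by blast
qed

lemma spikes_in_window_eq_offsets:
  assumes "S \<subseteq> {t0..}"
  shows "S \<inter> {t0..t0 + d} = (\<lambda>j. t0 + int j) ` ({j. t0 + int j \<in> S} \<inter> {..<nat (d + 1)})"
proof (intro equalityI subsetI)
  fix s assume "s \<in> S \<inter> {t0..t0 + d}"
  then have "s = t0 + int (nat (s - t0))" "nat (s - t0) \<in> {j. t0 + int j \<in> S} \<inter> {..<nat (d + 1)}"
    by auto
  then show "s \<in> (\<lambda>j. t0 + int j) ` ({j. t0 + int j \<in> S} \<inter> {..<nat (d + 1)})"
    by blast
qed auto

theorem theorem1:
  fixes k :: ef_kind
    and ein_min ein_max eout_min eout_max :: int
    and Gamma :: "'a set" and w :: "'a \<Rightarrow> real" and F :: "'a \<Rightarrow> int set"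
    and Fout :: "int set" and Vpre :: "int \<Rightarrow> real"
  assumes "ein_min \<le> ein_max" and "eout_min \<le> eout_max"
    and "finite Gamma"
    and "\<forall>i\<in>Gamma. F i \<subseteq> {0 .. ein_max - ein_min}"
    and "ef_neuron k ein_min (2 powr real_of_int eout_max) Gamma w F Fout Vpre"
    and "Fout \<inter> {0 .. (ein_max - ein_min + 1) - 2} = {}"
  shows "Fout \<inter> {(ein_max - ein_min + 1) - 1 .. (ein_max - ein_min + 1) + (eout_max - eout_min + 1) - 2}
         = (\<lambda>s. (ein_max - ein_min + 1) - 1 + s) `
             ltc k eout_min eout_max
               (max (\<Sum>i\<in>Gamma. w i * ltc_value ein_max (F i)) 0)"
proof -
  define t0 where "t0 = ein_max - ein_min"
  define J where "J = {j. t0 + int j \<in> Fout}"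
  have input: "\<forall>i\<in>Gamma. F i \<subseteq> {..t0}"
    using assms(4) unfolding t0_def by fastforce
  have "Fout \<subseteq> {0..}"
    using ef_neuron_nonneg_spikes[OF assms(5)] assms(4) by force
  then have late_spikes: "Fout \<subseteq> {t0..}"
    using assms(6) by (force simp: t0_def)
  have "ein_max = ein_min + t0"
    by (simp add: t0_def)
  then have "ltc k eout_min eout_max (max (\<Sum>i\<in>Gamma. w i * ltc_value ein_max (F i)) 0)
      = int ` (J \<inter> {..<nat (eout_max - eout_min + 1)})"
    using ef_neuron_Multi_greedy_digits[OF _ input late_spikes] ltc_Multi_greedy_digits[OF assms(2)]
      ef_neuron_Single_leading_digit[OF _ input late_spikes] ltc_Single_leading_digit[OF assms(2)]
      assms(5)
    by (cases k) (simp_all add: J_def)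
  moreover have "(ein_max - ein_min + 1) - 1 = t0"
    and "(ein_max - ein_min + 1) + (eout_max - eout_min + 1) - 2 = t0 + (eout_max - eout_min)"
    by (simp_all add: t0_def)
  ultimately show ?thesis
    using spikes_in_window_eq_offsets[OF late_spikes, of "eout_max - eout_min"]
    by (simp only: J_def image_image)
qed

end
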